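(* If $P_{\text{FA,L}} < 0.5$ and $P_{\text{MD,L}} < 0.5$, then the false alarm probability $P_{\text{FA}}(\gamma_t,p_t,\mathbf{t},P_{\text{FA,M}})$ and the missed detection probability $P_{\text{MD}}(\gamma_t,p_t,\mathbf{t},P_{\text{MD,M}})$ of the fusion center under the two stage approach are maximized when the malicious robots choose $P_{\text{FA,M}} = P_{\text{MD,M}} = 1$, for any vector $\mathbf{t}\in\{0,1\}^N$.
   Context: A network of $N$ robots $\mathcal{N}=\{1,\dots,N\}$ senses a binary event $\Xi\in\{0,1\}$ (hypotheses $\mathcal{H}_0$: $\Xi=0$, $\mathcal{H}_1$: $\Xi=1$); each robot $i$ sends a bit $Y_i\in\{0,1\}$ to a fusion center (FC). The true trust vector $\mathbf{t}\in\{0,1\}^N$ has $t_i=1$ if robot $i$ is legitimate and $t_i=0$ if malicious. Legitimate robots report their noisy measurement with false alarm probability $P_{\text{FA,L}}=\Pr(Y_i=1|\Xi=0,t_i=1)$ and missed detection probability $P_{\text{MD,L}}=\Pr(Y_i=0|\Xi=1,t_i=1)$; malicious robots have effective (after possibly flipping their bit) probabilities $P_{\text{FA,M}}=\Pr(Y_i=1|\Xi=0,t_i=0)$ and $P_{\text{MD,M}}=\Pr(Y_i=0|\Xi=1,t_i=0)$. Measurements are independent given the hypothesis and trust vector. Each robot also carries a stochastic trust value $\alpha_i$ with pmf $p_\alpha(a|t)$, independent of measurements and hypothesis. In the two stage approach the FC first sets $\hat t_i=1$ if $p_\alpha(a_i|t_i=1)/p_\alpha(a_i|t_i=0)>\gamma_t$,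 $\hat t_i=0$ if it is $<\gamma_t$, and in case of equality $\hat t_i=1$ with probability $p_t$. It then decides $\mathcal{H}_1$ iff $S_N=\sum_{i=1}^N \hat t_i[w_{1,\text{L}}y_i - w_{0,\text{L}}(1-y_i)]\ge \gamma_{\text{TS}}$, where $w_{1,\text{L}}=\log\frac{1-P_{\text{MD,L}}}{P_{\text{FA,L}}}$, $w_{0,\text{L}}=\log\frac{1-P_{\text{FA,L}}}{P_{\text{MD,L}}}$ and $\exp(\gamma_{\text{TS}})=\Pr(\Xi=0)/\Pr(\Xi=1)$. Thus $P_{\text{FA}}(\gamma_t,p_t,\mathbf{t},P_{\text{FA,M}})=\Pr(S_N\ge\gamma_{\text{TS}}\mid\mathcal{H}_0,\gamma_t,p_t,\mathbf{t},P_{\text{FA,M}})$ and $P_{\text{MD}}(\gamma_t,p_t,\mathbf{t},P_{\text{MD,M}})=\Pr(S_N<\gamma_{\text{TS}}\mid\mathcal{H}_1,\gamma_t,p_t,\mathbf{t},P_{\text{MD,M}})$. *)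

theory Defs
  imports "HOL-Probability.Probability"
begin

text \<open>Robots are indexed by 1..N. Trust value t i = True means legitimate (t_i = 1),
  False means malicious (t_i = 0). The trust values alpha_i have pmf palpha (t_i).\<close>

definition w1L :: "real \<Rightarrow> real \<Rightarrow> real" where
  "w1L PFAL PMDL = ln ((1 - PMDL) / PFAL)"

definition w0L :: "real \<Rightarrow> real \<Rightarrow> real" where
  "w0L PFAL PMDL = ln ((1 - PFAL) / PMDL)"

text \<open>Threshold of the fusion rule: exp gamma_TS = Pr(Xi=0)/Pr(Xi=1), with prior pi0 = Pr(Xi=0).\<close>
definition gammaTS :: "real \<Rightarrow> real" where
  "gammaTS pi0 = ln (pi0 / (1 - pi0))"

text \<open>Distribution of the estimated trust hat t_i of a robot with true trust ti:
  likelihood-ratio test p(a|1)/p(a|0) vs gamma_t (written in cross-multiplied form, so that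
  a zero denominator means an infinite ratio), randomised with probability pt on ties.\<close>
definition that_pmf :: "(bool \<Rightarrow> 'a pmf) \<Rightarrow> real \<Rightarrow> real \<Rightarrow> bool \<Rightarrow> bool pmf" where
  "that_pmf palpha gt pt ti =
     palpha ti \<bind> (\<lambda>a.
       if pmf (palpha True) a > gt * pmf (palpha False) a then return_pmf True
       else if pmf (palpha True) a < gt * pmf (palpha False) a then return_pmf False
       else bernoulli_pmf pt)"

definition y0_pmf :: "real \<Rightarrow> real \<Rightarrow> bool \<Rightarrow> bool pmf" where
  "y0_pmf PFAL PFAM ti = bernoulli_pmf (if ti then PFAL else PFAM)"

definition y1_pmf :: "real \<Rightarrow> real \<Rightarrow> bool \<Rightarrow> bool pmf" where
  "y1_pmf PMDL PMDM ti = bernoulli_pmf (1 - (if ti then PMDL else PMDM))"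

text \<open>Fusion statistic S_N on an outcome omega i = (hat t_i, y_i).\<close>
definition S_N :: "nat \<Rightarrow> real \<Rightarrow> real \<Rightarrow> (nat \<Rightarrow> bool \<times> bool) \<Rightarrow> real" where
  "S_N N PFAL PMDL \<omega> =
     (\<Sum>i\<in>{1..N}. of_bool (fst (\<omega> i)) *
        (w1L PFAL PMDL * of_bool (snd (\<omega> i)) - w0L PFAL PMDL * (1 - of_bool (snd (\<omega> i)))))"

definition P_FA :: "nat \<Rightarrow> (bool \<Rightarrow> 'a pmf) \<Rightarrow> real \<Rightarrow> real \<Rightarrow> real \<Rightarrow> real \<Rightarrow> real
                    \<Rightarrow> (nat \<Rightarrow> bool) \<Rightarrow> real \<Rightarrow> real" where
  "P_FA N palpha pi0 PFAL PMDL gt pt t PFAM =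
     measure_pmf.prob
       (Pi_pmf {1..N} (False, False)
          (\<lambda>i. pair_pmf (that_pmf palpha gt pt (t i)) (y0_pmf PFAL PFAM (t i))))
       {\<omega>. S_N N PFAL PMDL \<omega> \<ge> gammaTS pi0}"

definition P_MD :: "nat \<Rightarrow> (bool \<Rightarrow> 'a pmf) \<Rightarrow> real \<Rightarrow> real \<Rightarrow> real \<Rightarrow> real \<Rightarrow> real
                    \<Rightarrow> (nat \<Rightarrow> bool) \<Rightarrow> real \<Rightarrow> real" where
  "P_MD N palpha pi0 PFAL PMDL gt pt t PMDM =
     measure_pmf.prob
       (Pi_pmf {1..N} (False, False)
          (\<lambda>i. pair_pmf (that_pmf palpha gt pt (t i)) (y1_pmf PMDL PMDM (t i))))
       {\<omega>. S_N N PFAL PMDL \<omega> < gammaTS pi0}"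

end

theory Submission
  imports Defs
begin

text \<open>Couple the malicious strategy P_FA,M = 1 with an arbitrary one: draw the trust estimates
  and the reported bits from the arbitrary strategy, then overwrite the bits of the malicious
  robots by 1. This reproduces the law of the statistic under P_FA,M = 1. Since
  P_FA,L + P_MD,L \<le> 1, both weights w_1,L and w_0,L are nonnegative, so turning a reported 0
  into a 1 can only increase S_N, and the false alarm event can only grow. Missed detections
  are handled symmetrically, overwriting the malicious bits by 0.\<close>

lemma bernoulli_pmf_1: "bernoulli_pmf 1 = return_pmf True"
  by (rule pmf_eqI) (simp split: split_indicator)

lemma bernoulli_pmf_0: "bernoulli_pmf 0 = return_pmf False"
  by (rule pmf_eqI) (auto split: split_indicator)

lemma pair_pmf_return_pmf_conv_map:
  "pair_pmf A (return_pmf c) = map_pmf (\<lambda>p. (fst p, c)) (pair_pmf A B)"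
proof -
  have "map_pmf (\<lambda>p. (fst p, c)) (pair_pmf A B) = map_pmf (\<lambda>x. (x, c)) (map_pmf fst (pair_pmf A B))"
    by (simp add: pmf.map_comp o_def)
  then show ?thesis
    by (simp add: map_fst_pair_pmf pair_return_pmf2)
qed

lemma Pi_pmf_map_dependent:
  assumes "finite A"
  shows "Pi_pmf A d (\<lambda>x. map_pmf (f x) (g x)) =
         map_pmf (\<lambda>h x. if x \<in> A then f x (h x) else d) (Pi_pmf A d g)"
proof -
  have "Pi_pmf A d (\<lambda>x. map_pmf (f x) (g x)) =
          Pi_pmf A d (\<lambda>x. g x \<bind> (\<lambda>y. return_pmf (f x y)))"
    by (simp add: map_pmf_def)
  also have "\<dots> = Pi_pmf A d g \<bind> (\<lambda>h. Pi_pmf A d (\<lambda>x. return_pmf (f x (h x))))"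
    by (rule Pi_pmf_bind[OF assms])
  also have "\<dots> = Pi_pmf A d g \<bind> (\<lambda>h. return_pmf (\<lambda>x. if x \<in> A then f x (h x) else d))"
    using assms by simp
  finally show ?thesis
    by (simp add: map_pmf_def)
qed

lemma prob_le_prob_map_pmf:
  assumes "\<And>x. x \<in> X \<Longrightarrow> f x \<in> Y"
  shows "measure_pmf.prob M X \<le> measure_pmf.prob (map_pmf f M) Y"
  using assms by (auto intro: measure_pmf.finite_measure_mono)

definition overwrite_reports :: "'i set \<Rightarrow> 'b \<Rightarrow> ('i \<Rightarrow> 'a \<times> 'b) \<Rightarrow> 'i \<Rightarrow> 'a \<times> 'b" where
  "overwrite_reports B c \<omega> i = (if i \<in> B then (fst (\<omega> i), c) else \<omega> i)"

lemma Pi_pmf_pair_return_pmf_conv_overwrite_reports: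
  assumes "finite A"
  shows "Pi_pmf A d (\<lambda>i. pair_pmf (T i) (if i \<in> B then return_pmf c else Y i)) =
         map_pmf (\<lambda>\<omega> i. if i \<in> A then overwrite_reports B c \<omega> i else d)
           (Pi_pmf A d (\<lambda>i. pair_pmf (T i) (Y i)))"
proof -
  have "Pi_pmf A d (\<lambda>i. pair_pmf (T i) (if i \<in> B then return_pmf c else Y i)) =
        Pi_pmf A d (\<lambda>i. map_pmf (\<lambda>p. if i \<in> B then (fst p, c) else p) (pair_pmf (T i) (Y i)))"
    by (intro Pi_pmf_cong refl) (simp add: pair_pmf_return_pmf_conv_map[of _ _ "Y _"])
  also have "\<dots> = map_pmf (\<lambda>\<omega> i. if i \<in> A then overwrite_reports B c \<omega> i else d)
                       (Pi_pmf A d (\<lambda>i. pair_pmf (T i) (Y i)))"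
    unfolding overwrite_reports_def by (rule Pi_pmf_map_dependent[OF assms])
  finally show ?thesis .
qed

lemma w1L_nonneg:
  assumes "0 \<le> PFAL" "PFAL + PMDL \<le> 1"
  shows "0 \<le> w1L PFAL PMDL"
proof (cases "PFAL = 0")
  case False
  then have "1 \<le> (1 - PMDL) / PFAL"
    using assms by (simp add: field_simps)
  then show ?thesis
    by (simp add: w1L_def)
qed (simp add: w1L_def) \<comment> \<open>for PFAL = 0 the weight is the junk value ln (x / 0) = ln 0 = 0\<close>

lemma w0L_nonneg:
  assumes "0 \<le> PMDL" "PFAL + PMDL \<le> 1"
  shows "0 \<le> w0L PFAL PMDL"
proof (cases "PMDL = 0")
  case False
  then have "1 \<le> (1 - PFAL) / PMDL"
    using assms by (simp add: field_simps)
  then show ?thesis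
    by (simp add: w0L_def)
qed (simp add: w0L_def)

lemma S_N_mono:
  assumes "0 \<le> w1L PFAL PMDL" "0 \<le> w0L PFAL PMDL"
    and "\<And>i. i \<in> {1..N} \<Longrightarrow> fst (\<omega> i) = fst (\<omega>' i)"
    and "\<And>i. i \<in> {1..N} \<Longrightarrow> snd (\<omega> i) \<Longrightarrow> snd (\<omega>' i)"
  shows "S_N N PFAL PMDL \<omega> \<le> S_N N PFAL PMDL \<omega>'"
  unfolding S_N_def
  by (intro sum_mono) (use assms in \<open>auto simp: of_bool_def\<close>)

lemma P_FA_le_P_FA_1:
  assumes "0 \<le> PFAL" "0 \<le> PMDL" "PFAL + PMDL \<le> 1"
  shows "P_FA N palpha pi0 PFAL PMDL gt pt t PFAM \<le> P_FA N palpha pi0 PFAL PMDL gt pt t 1"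
proof -
  let ?overwrite = "\<lambda>\<omega> i. if i \<in> {1..N} then overwrite_reports {i. \<not> t i} True \<omega> i else (False, False)"
  have malicious_report: "y0_pmf PFAL 1 (t i) = (if i \<in> {i. \<not> t i} then return_pmf True else y0_pmf PFAL PFAM (t i))" for i
    by (simp add: y0_pmf_def bernoulli_pmf_1)
  have law: "Pi_pmf {1..N} (False, False)
                    (\<lambda>i. pair_pmf (that_pmf palpha gt pt (t i)) (y0_pmf PFAL 1 (t i))) =
                  map_pmf ?overwrite (Pi_pmf {1..N} (False, False)
                    (\<lambda>i. pair_pmf (that_pmf palpha gt pt (t i)) (y0_pmf PFAL PFAM (t i))))"
    by (simp only: malicious_report) (rule Pi_pmf_pair_return_pmf_conv_overwrite_reports, simp)
  have "S_N N PFAL PMDL \<omega> \<le> S_N N PFAL PMDL (?overwrite \<omega>)" for \<omega>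
    by (rule S_N_mono) (auto simp: overwrite_reports_def assms w1L_nonneg w0L_nonneg)
  then show ?thesis
    unfolding P_FA_def law by (intro prob_le_prob_map_pmf) (auto intro: order_trans)
qed

lemma P_MD_le_P_MD_1:
  assumes "0 \<le> PFAL" "0 \<le> PMDL" "PFAL + PMDL \<le> 1"
  shows "P_MD N palpha pi0 PFAL PMDL gt pt t PMDM \<le> P_MD N palpha pi0 PFAL PMDL gt pt t 1"
proof -
  let ?overwrite = "\<lambda>\<omega> i. if i \<in> {1..N} then overwrite_reports {i. \<not> t i} False \<omega> i else (False, False)"
  have malicious_report: "y1_pmf PMDL 1 (t i) = (if i \<in> {i. \<not> t i} then return_pmf False else y1_pmf PMDL PMDM (t i))" for i
    by (simp add: y1_pmf_def bernoulli_pmf_0)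
  have law: "Pi_pmf {1..N} (False, False)
                    (\<lambda>i. pair_pmf (that_pmf palpha gt pt (t i)) (y1_pmf PMDL 1 (t i))) =
                  map_pmf ?overwrite (Pi_pmf {1..N} (False, False)
                    (\<lambda>i. pair_pmf (that_pmf palpha gt pt (t i)) (y1_pmf PMDL PMDM (t i))))"
    by (simp only: malicious_report) (rule Pi_pmf_pair_return_pmf_conv_overwrite_reports, simp)
  have "S_N N PFAL PMDL (?overwrite \<omega>) \<le> S_N N PFAL PMDL \<omega>" for \<omega>
    by (rule S_N_mono) (auto simp: overwrite_reports_def assms w1L_nonneg w0L_nonneg split: if_splits)
  then show ?thesis
    unfolding P_MD_def law by (intro prob_le_prob_map_pmf) (auto intro: le_less_trans)
qed

theorem lemma1:
  fixes N :: nat and palpha :: "bool \<Rightarrow> 'a pmf" and t :: "nat \<Rightarrow> bool"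
    and pi0 PFAL PMDL gt pt :: real
  assumes "0 < pi0" "pi0 < 1"
    and "0 \<le> PFAL" "PFAL < 1/2" and "0 \<le> PMDL" "PMDL < 1/2"
    and "0 \<le> pt" "pt \<le> 1"
  shows "(\<forall>PFAM\<in>{0..1}. P_FA N palpha pi0 PFAL PMDL gt pt t PFAM
                          \<le> P_FA N palpha pi0 PFAL PMDL gt pt t 1)
       \<and> (\<forall>PMDM\<in>{0..1}. P_MD N palpha pi0 PFAL PMDL gt pt t PMDM
                          \<le> P_MD N palpha pi0 PFAL PMDL gt pt t 1)"
  using assms by (simp add: P_FA_le_P_FA_1 P_MD_le_P_MD_1)

end
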